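(* If $0<q<1$, $u>0$ and $v\in\mathbb{R}$, then \[ \left|\left(q^{u+iv};q\right)_{\infty}\right|\ge\left(q^{u};q\right)_{\infty}q^{v^{2}/4}, \qquad \Gamma_{q}(u)\ge\left|\Gamma_{q}(u+iv)\right|q^{v^{2}/4}, \] and \[ \frac{\vartheta_{4}\left(v\vert iu\right)}{\vartheta_{4}\left(0\vert iu\right)}\ge e^{-\pi v^{2}/u}. \]
   Context: For $0<q<1$ and $a\in\mathbb{C}$, $(a;q)_{\infty}=\prod_{k=0}^{\infty}(1-aq^{k})$ and $(a_1,\dots,a_r;q)_\infty=\prod_{s=1}^r(a_s;q)_\infty$; $q^{w}=e^{w\log q}$ for complex $w$. The $q$-Gamma function is $\Gamma_{q}(x)=(1-q)^{1-x}\frac{(q;q)_{\infty}}{(q^{x};q)_{\infty}}$ (with $(1-q)^{1-x}=e^{(1-x)\log(1-q)}$). The Jacobi theta function is $\vartheta_{4}(v\vert\tau)=\sum_{n=-\infty}^{\infty}p^{n^{2}}(-z)^{n}=(p^{2},pz,p/z;p^{2})_{\infty}$ where $z=e^{2\pi iv}$, $p=e^{\pi i\tau}$, $\Im(\tau)>0$. *)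

theory Defs
  imports "HOL-Analysis.Analysis"
begin

definition cpowq :: "real \<Rightarrow> complex \<Rightarrow> complex" where
  "cpowq q w = exp (w * of_real (ln q))"

definition qpoch_inf :: "complex \<Rightarrow> real \<Rightarrow> complex" where
  "qpoch_inf a q = (\<Prod>k. 1 - a * of_real q ^ k)"

definition qGamma :: "real \<Rightarrow> complex \<Rightarrow> complex" where
  "qGamma q x = exp ((1 - x) * of_real (ln (1 - q))) * qpoch_inf (of_real q) q
                / qpoch_inf (cpowq q x) q"

definition theta4 :: "complex \<Rightarrow> complex \<Rightarrow> complex" where
  "theta4 v tau = (let z = exp (2 * of_real pi * \<i> * v); p = exp (of_real pi * \<i> * tau)
     in (\<Sum>\<^sub>\<infinity>n::int. p ^ (nat (n^2)) * (- z) powi n))"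

end

theory Submission
  imports Defs
begin

text \<open>
  For \<open>|a| < 1\<close> every factor satisfies \<open>|1 - a q^k| \<ge> 1 - |a| q^k\<close>, hence
  \<open>|(a;q)\<^sub>\<infinity>| \<ge> (|a|;q)\<^sub>\<infinity>\<close>. Since \<open>|q^(u+iv)| = q^u\<close>, this gives
  \<open>|(q^(u+iv);q)\<^sub>\<infinity>| \<ge> (q^u;q)\<^sub>\<infinity>\<close>, and the bound for \<open>\<Gamma>\<^sub>q\<close> follows
  because \<open>(q^x;q)\<^sub>\<infinity>\<close> is its denominator; both inequalities survive multiplication
  by \<open>q^(v\<^sup>2/4) \<le> 1\<close>.

  For \<open>\<theta>\<^sub>4\<close> put \<open>p = e^(-\<pi> u)\<close>. The Jacobi triple product
  \<open>\<theta>\<^sub>4(v|iu) = (p\<^sup>2;p\<^sup>2)\<^sub>\<infinity> \<Prod>\<^sub>l (1 - 2 p^(2l+1) cos 2\<pi>v + p^(4l+2))\<close> has factors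
  \<open>|1 - p^(2l+1) e^(2\<pi>iv)|\<^sup>2\<close>, each positive and minimal at \<open>v = 0\<close>; so
  \<open>\<theta>\<^sub>4(v|iu) \<ge> \<theta>\<^sub>4(0|iu) > 0\<close> and the ratio is at least \<open>1 \<ge> e^(-\<pi>v\<^sup>2/u)\<close>.
  The triple product is obtained as the limit of its finite form, which is Cauchy's
  \<open>q\<close>-binomial theorem for \<open>\<Prod>\<^bsub>i<2n\<^esub> (p^(2n-1) e^(ix) - p^(2i))\<close>; Tannery's theorem
  justifies the passage to the limit, the Gaussian binomials \<open>[2n, n+j]\<close> tending to
  \<open>1/(p\<^sup>2;p\<^sup>2)\<^sub>\<infinity>\<close>.
\<close>

section \<open>Infinite \<open>q\<close>-Pochhammer symbols and the \<open>q\<close>-Gamma function\<close>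

lemma norm_qpoch_factor_less_1:
  fixes a :: complex
  assumes "0 \<le> q" "q \<le> 1" "norm a < 1"
  shows "norm (a * of_real q ^ k) < 1"
proof -
  have "norm (a * of_real q ^ k) = norm a * q ^ k"
    using assms by (simp add: norm_mult norm_power)
  also have "\<dots> \<le> norm a"
    using assms by (simp add: mult_left_le power_le_one)
  finally show ?thesis using assms by simp
qed

lemma convergent_prod_qpoch:
  fixes a :: complex
  assumes "0 < q" "q < 1" "norm a < 1"
  shows "convergent_prod (\<lambda>k. 1 - a * of_real q ^ k)"
proof -
  have "summable (\<lambda>k. norm a * q ^ k)"
    using assms by (intro summable_mult summable_geometric) auto
  then have "summable (\<lambda>k. norm (- (a * of_real q ^ k)))"
    using assms by (simp add: norm_mult norm_power)
  moreover have "- (a * of_real q ^ k) \<noteq> - 1" for k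
    using norm_qpoch_factor_less_1[of q a k] assms by auto
  ultimately have "convergent_prod (\<lambda>k. 1 + - (a * of_real q ^ k))"
    by (rule summable_imp_convergent_prod_complex)
  then show ?thesis by simp
qed

lemma qpoch_inf_LIMSEQ:
  assumes "0 < q" "q < 1" "norm a < 1"
  shows "(\<lambda>n. \<Prod>k\<le>n. 1 - a * of_real q ^ k) \<longlonglongrightarrow> qpoch_inf a q"
  unfolding qpoch_inf_def by (rule convergent_prod_LIMSEQ[OF convergent_prod_qpoch[OF assms]])

lemma qpoch_inf_nonzero:
  assumes "0 < q" "q < 1" "norm a < 1"
  shows "qpoch_inf a q \<noteq> 0"
  unfolding qpoch_inf_def
proof (rule prodinf_nonzero[OF convergent_prod_qpoch[OF assms]])
  show "1 - a * of_real q ^ k \<noteq> 0" for k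
    using norm_qpoch_factor_less_1[of q a k] assms by auto
qed

lemma qpoch_inf_of_real_LIMSEQ:
  assumes "0 < q" "q < 1" "0 \<le> r" "r < 1"
  shows "(\<lambda>n. of_real (\<Prod>k\<le>n. 1 - r * q ^ k)) \<longlonglongrightarrow> qpoch_inf (of_real r) q"
proof -
  have "(\<Prod>k\<le>n. 1 - of_real r * of_real q ^ k) = of_real (\<Prod>k\<le>n. 1 - r * q ^ k)" for n
    by simp
  then show ?thesis
    using qpoch_inf_LIMSEQ[of q "of_real r"] assms by simp
qed

lemma Re_qpoch_inf_of_real_LIMSEQ:
  assumes "0 < q" "q < 1" "0 \<le> r" "r < 1"
  shows "(\<lambda>n. \<Prod>k\<le>n. 1 - r * q ^ k) \<longlonglongrightarrow> Re (qpoch_inf (of_real r) q)"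
  using tendsto_Re[OF qpoch_inf_of_real_LIMSEQ[OF assms]] by (simp only: Re_complex_of_real)

lemma Im_qpoch_inf_of_real:
  assumes "0 < q" "q < 1" "0 \<le> r" "r < 1"
  shows "Im (qpoch_inf (of_real r) q) = 0"
  using tendsto_Im[OF qpoch_inf_of_real_LIMSEQ[OF assms]]
  by (simp only: Im_complex_of_real LIMSEQ_const_iff)

lemma Re_qpoch_inf_of_real_pos:
  assumes "0 < q" "q < 1" "0 \<le> r" "r < 1"
  shows "Re (qpoch_inf (of_real r) q) > 0"
proof -
  have "0 \<le> 1 - r * q ^ k" for k
    using assms by (simp add: mult_le_one power_le_one)
  then have "0 \<le> Re (qpoch_inf (of_real r) q)"
    by (intro tendsto_lowerbound[OF Re_qpoch_inf_of_real_LIMSEQ[OF assms]] always_eventually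
        allI prod_nonneg) auto
  moreover have "Re (qpoch_inf (of_real r) q) \<noteq> 0"
    using qpoch_inf_nonzero[of q "of_real r"] Im_qpoch_inf_of_real[OF assms] assms
    by (auto simp: complex_eq_iff)
  ultimately show ?thesis by simp
qed

lemma norm_qpoch_inf_ge:
  assumes "0 < q" "q < 1" "norm a < 1"
  shows "Re (qpoch_inf (of_real (norm a)) q) \<le> norm (qpoch_inf a q)"
proof (rule LIMSEQ_le)
  show "(\<lambda>n. \<Prod>k\<le>n. 1 - norm a * q ^ k) \<longlonglongrightarrow> Re (qpoch_inf (of_real (norm a)) q)"
    using Re_qpoch_inf_of_real_LIMSEQ[of q "norm a"] assms by simp
  show "(\<lambda>n. norm (\<Prod>k\<le>n. 1 - a * of_real q ^ k)) \<longlonglongrightarrow> norm (qpoch_inf a q)"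
    by (intro tendsto_norm qpoch_inf_LIMSEQ assms)
  have "(\<Prod>k\<le>n. 1 - norm a * q ^ k) \<le> (\<Prod>k\<le>n. norm (1 - a * of_real q ^ k))" for n
  proof (intro prod_mono conjI)
    fix k
    have "norm (a * of_real q ^ k) = norm a * q ^ k"
      using assms by (simp add: norm_mult norm_power)
    then show "0 \<le> 1 - norm a * q ^ k" "1 - norm a * q ^ k \<le> norm (1 - a * of_real q ^ k)"
      using norm_qpoch_factor_less_1[of q a k] norm_triangle_ineq2[of 1 "a * of_real q ^ k"] assms
      by auto
  qed
  then show "\<exists>N. \<forall>n\<ge>N. (\<Prod>k\<le>n. 1 - norm a * q ^ k) \<le> norm (\<Prod>k\<le>n. 1 - a * of_real q ^ k)"
    by (simp add: prod_norm)
qed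

lemma cpowq_of_real: "0 < q \<Longrightarrow> cpowq q (of_real u) = of_real (q powr u)"
  unfolding cpowq_def powr_def by (simp flip: exp_of_real)

lemma norm_cpowq: "norm (cpowq q (Complex u v)) = exp (u * ln q)"
  unfolding cpowq_def by (simp add: norm_exp_eq_Re)

lemma powr_less_1: "0 < (q::real) \<Longrightarrow> q < 1 \<Longrightarrow> 0 < u \<Longrightarrow> q powr u < 1"
  using powr_less_mono2[of u q 1] by simp

lemma Im_qpoch_inf_cpowq_of_real:
  "0 < q \<Longrightarrow> q < 1 \<Longrightarrow> 0 < u \<Longrightarrow> Im (qpoch_inf (cpowq q (of_real u)) q) = 0"
  by (simp add: cpowq_of_real powr_less_1 Im_qpoch_inf_of_real)

lemma Re_qpoch_inf_cpowq_of_real_pos: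
  "0 < q \<Longrightarrow> q < 1 \<Longrightarrow> 0 < u \<Longrightarrow> Re (qpoch_inf (cpowq q (of_real u)) q) > 0"
  by (simp add: cpowq_of_real powr_less_1 Re_qpoch_inf_of_real_pos)

lemma qpoch_inf_cpowq_ge:
  assumes "0 < q" "q < 1" "0 < u"
  shows "Re (qpoch_inf (cpowq q (of_real u)) q) \<le> norm (qpoch_inf (cpowq q (Complex u v)) q)"
  using norm_qpoch_inf_ge[of q "cpowq q (Complex u v)"] powr_less_1[OF assms] assms
  by (simp add: norm_cpowq cpowq_of_real powr_def)

lemma qGamma_of_real:
  assumes "0 < q" "q < 1" "0 < u"
  shows "qGamma q (of_real u) = of_real (exp ((1 - u) * ln (1 - q)) * Re (qpoch_inf (of_real q) q)
                                          / Re (qpoch_inf (cpowq q (of_real u)) q))"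
proof -
  have Q: "qpoch_inf (of_real q) q = of_real (Re (qpoch_inf (of_real q) q))"
    using Im_qpoch_inf_of_real[of q q] assms by (simp add: complex_eq_iff)
  have P: "qpoch_inf (cpowq q (of_real u)) q = of_real (Re (qpoch_inf (cpowq q (of_real u)) q))"
    using Im_qpoch_inf_cpowq_of_real[OF assms] by (simp add: complex_eq_iff)
  have E: "exp ((1 - of_real u) * of_real (ln (1 - q))) = (of_real (exp ((1 - u) * ln (1 - q))) :: complex)"
    by (simp flip: exp_of_real)
  show ?thesis
    unfolding qGamma_def E by (subst Q, subst P) simp
qed

lemma norm_qGamma:
  assumes "0 < q" "q < 1"
  shows "norm (qGamma q (Complex u v)) = exp ((1 - u) * ln (1 - q)) * Re (qpoch_inf (of_real q) q)
                                          / norm (qpoch_inf (cpowq q (Complex u v)) q)"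
proof -
  have "norm (qpoch_inf (of_real q) q) = Re (qpoch_inf (of_real q) q)"
    using Im_qpoch_inf_of_real[of q q] Re_qpoch_inf_of_real_pos[of q q] assms
    by (simp add: cmod_eq_Re)
  then show ?thesis
    unfolding qGamma_def by (simp add: norm_mult norm_divide norm_exp_eq_Re)
qed

lemma norm_qGamma_le:
  assumes "0 < q" "q < 1" "0 < u"
  shows "norm (qGamma q (Complex u v)) \<le> Re (qGamma q (of_real u))"
proof -
  have "Re (qpoch_inf (cpowq q (of_real u)) q) \<le> norm (qpoch_inf (cpowq q (Complex u v)) q)"
    and "0 < Re (qpoch_inf (cpowq q (of_real u)) q)"
    using qpoch_inf_cpowq_ge Re_qpoch_inf_cpowq_of_real_pos assms by auto
  moreover have "0 < Re (qpoch_inf (of_real q) q)"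
    using Re_qpoch_inf_of_real_pos[of q q] assms by simp
  ultimately show ?thesis
    unfolding norm_qGamma[OF assms(1,2)] qGamma_of_real[OF assms] Re_complex_of_real
    by (intro divide_left_mono mult_pos_pos) auto
qed

section \<open>Gaussian binomial coefficients\<close>

definition qpoch :: "real \<Rightarrow> nat \<Rightarrow> real" where
  "qpoch q m = (\<Prod>i<m. 1 - q ^ Suc i)"

definition qbinom :: "real \<Rightarrow> nat \<Rightarrow> nat \<Rightarrow> real" where
  "qbinom q m k = (if k \<le> m then qpoch q m / (qpoch q k * qpoch q (m - k)) else 0)"

lemma qpoch_0 [simp]: "qpoch q 0 = 1"
  by (simp add: qpoch_def)

lemma qpoch_Suc: "qpoch q (Suc m) = qpoch q m * (1 - q ^ Suc m)"
  by (simp add: qpoch_def)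

lemma qpoch_factor_bounds:
  fixes q :: real
  assumes "0 < q" "q < 1"
  shows "0 < 1 - q ^ Suc i" "1 - q ^ Suc i \<le> 1"
  using power_Suc_less_one[OF assms, of i] assms by simp_all

lemma qpoch_pos: "0 < q \<Longrightarrow> q < 1 \<Longrightarrow> 0 < qpoch q m"
  unfolding qpoch_def by (intro prod_pos) (use qpoch_factor_bounds in blast)

lemma qpoch_le_1: "0 < q \<Longrightarrow> q < 1 \<Longrightarrow> qpoch q m \<le> 1"
  unfolding qpoch_def by (intro prod_le_1) (use qpoch_factor_bounds less_imp_le in blast)

lemma decseq_qpoch: "0 < q \<Longrightarrow> q < 1 \<Longrightarrow> decseq (qpoch q)"
  by (intro decseq_SucI) (simp add: qpoch_Suc qpoch_pos mult_le_cancel_left1)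

lemma qpoch_LIMSEQ:
  assumes "0 < q" "q < 1"
  shows "qpoch q \<longlonglongrightarrow> Re (qpoch_inf (of_real q) q)"
proof -
  have "(\<lambda>n. qpoch q (Suc n)) = (\<lambda>n. \<Prod>k\<le>n. 1 - q * q ^ k)"
    unfolding qpoch_def by (simp add: lessThan_Suc_atMost)
  then show ?thesis
    using Re_qpoch_inf_of_real_LIMSEQ[of q q] assms by (simp add: LIMSEQ_imp_Suc)
qed

lemma qpoch_ge_qpoch_inf:
  "0 < q \<Longrightarrow> q < 1 \<Longrightarrow> Re (qpoch_inf (of_real q) q) \<le> qpoch q m"
  using decseq_ge[OF decseq_qpoch qpoch_LIMSEQ] .

lemma qbinom_0 [simp]: "0 < q \<Longrightarrow> q < 1 \<Longrightarrow> qbinom q m 0 = 1"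
  using qpoch_pos[of q m] by (simp add: qbinom_def)

lemma qbinom_symmetric: "k \<le> m \<Longrightarrow> qbinom q m (m - k) = qbinom q m k"
  by (simp add: qbinom_def mult.commute)

lemma qbinom_Suc_Suc:
  assumes "0 < q" "q < 1"
  shows "qbinom q (Suc m) (Suc k) = qbinom q m (Suc k) + q ^ (m - k) * qbinom q m k"
proof (cases "k < m")
  case True
  then obtain d where d: "m - k = Suc d" "m - Suc k = d"
    by (metis Suc_diff_Suc diff_Suc_1)
  define A B C x y where A_def: "A = qpoch q m" and B_def: "B = qpoch q k"
    and C_def: "C = qpoch q d" and x_def: "x = q ^ Suc k" and y_def: "y = q ^ Suc d"
  have "Suc m = Suc k + Suc d"
    using d True by simp
  then have "q ^ Suc m = x * y"
    unfolding x_def y_def by (simp only: power_add)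
  then have lhs: "qbinom q (Suc m) (Suc k) = A * (1 - x * y) / (B * (1 - x) * (C * (1 - y)))"
    using True d by (simp add: qbinom_def qpoch_Suc A_def B_def C_def x_def y_def)
  have rhs: "qbinom q m (Suc k) = A / (B * (1 - x) * C)" "qbinom q m k = A / (B * (C * (1 - y)))"
    using True d by (simp_all add: qbinom_def qpoch_Suc A_def B_def C_def x_def y_def)
  have ne: "1 - x \<noteq> 0" "1 - y \<noteq> 0" "B \<noteq> 0" "C \<noteq> 0"
    using qpoch_factor_bounds(1)[OF assms] qpoch_pos[OF assms]
    unfolding x_def y_def B_def C_def by (metis less_irrefl)+
  have identity: "A * (1 - (1 - s) * (1 - t)) / (B * s * (C * t))
                 = A / (B * s * C) + (1 - t) * (A / (B * (C * t)))"
    if "s \<noteq> 0" "t \<noteq> 0" "B \<noteq> 0" "C \<noteq> 0" for s t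
    using that by (simp add: field_simps)
  have "A * (1 - x * y) / (B * (1 - x) * (C * (1 - y)))
        = A / (B * (1 - x) * C) + y * (A / (B * (C * (1 - y))))"
    using identity[OF ne] by simp
  then show ?thesis
    unfolding lhs rhs d(1) y_def by simp
next
  case False
  then show ?thesis
    using qpoch_pos[OF assms] qpoch_factor_bounds(1)[OF assms, of m]
    by (cases "k = m") (auto simp: qbinom_def qpoch_Suc)
qed

lemma qbinom_eq_0: "m < k \<Longrightarrow> qbinom q m k = 0"
  by (simp add: qbinom_def)

lemma qbinom_Suc_Suc_weighted:
  assumes "0 < q" "q < 1"
  shows "q ^ (Suc k * k div 2) * qbinom q (Suc m) (Suc k)
         = q ^ (Suc k * k div 2) * qbinom q m (Suc k) + q ^ m * (q ^ (k * (k - 1) div 2) * qbinom q m k)"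
proof (cases "k \<le> m")
  case True
  have "Suc k * k div 2 + (m - k) = m + k * (k - 1) div 2"
    using True by (cases k) simp_all
  then have "q ^ (Suc k * k div 2) * q ^ (m - k) = q ^ m * q ^ (k * (k - 1) div 2)"
    by (metis power_add)
  then show ?thesis
    unfolding qbinom_Suc_Suc[OF assms] by (simp add: algebra_simps)
qed (simp add: qbinom_eq_0)

lemma qbinomial_theorem:
  fixes X Y :: "'a::{comm_ring_1,real_algebra_1}"
  assumes "0 < q" "q < 1"
  shows "(\<Prod>i<m. X + of_real (q ^ i) * Y)
         = (\<Sum>k\<le>m. of_real (q ^ (k * (k - 1) div 2) * qbinom q m k) * X ^ (m - k) * Y ^ k)"
proof (induction m)
  case 0
  then show ?case by (simp add: assms)
next
  case (Suc m)
  define c where "c m k = q ^ (k * (k - 1) div 2) * qbinom q m k" for m k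
  have c_Suc_Suc: "c (Suc m) (Suc k) = c m (Suc k) + q ^ m * c m k" for k
    unfolding c_def using qbinom_Suc_Suc_weighted[OF assms] by simp
  define t where "t k = of_real (c m k) * X ^ (m - k) * Y ^ k" for k
  have X_part: "X * (\<Sum>k\<le>m. t k) = X ^ Suc m + (\<Sum>k\<le>m. of_real (c m (Suc k)) * X ^ (m - k) * Y ^ Suc k)"
  proof -
    have "X * (\<Sum>k\<le>m. t k) = (\<Sum>k\<le>Suc m. of_real (c m k) * X ^ (Suc m - k) * Y ^ k)"
      by (simp add: t_def sum_distrib_left c_def qbinom_eq_0 Suc_diff_le algebra_simps)
    also have "\<dots> = X ^ Suc m + (\<Sum>k\<le>m. of_real (c m (Suc k)) * X ^ (m - k) * Y ^ Suc k)"
      by (subst sum.atMost_Suc_shift) (simp add: c_def assms)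
    finally show ?thesis .
  qed
  have Y_part: "of_real (q ^ m) * Y * (\<Sum>k\<le>m. t k)
                = (\<Sum>k\<le>m. of_real (q ^ m * c m k) * X ^ (m - k) * Y ^ Suc k)"
    by (simp add: t_def sum_distrib_left algebra_simps)
  have "(\<Prod>i<Suc m. X + of_real (q ^ i) * Y) = (\<Sum>k\<le>m. t k) * (X + of_real (q ^ m) * Y)"
    using Suc.IH by (simp add: t_def c_def)
  also have "\<dots> = X ^ Suc m + (\<Sum>k\<le>m. of_real (c (Suc m) (Suc k)) * X ^ (m - k) * Y ^ Suc k)"
    unfolding c_Suc_Suc distrib_left distrib_right of_real_add sum.distrib
    using X_part Y_part by (simp add: algebra_simps)
  also have "\<dots> = (\<Sum>k\<le>Suc m. of_real (c (Suc m) k) * X ^ (Suc m - k) * Y ^ k)"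
    by (subst sum.atMost_Suc_shift) (simp add: c_def assms)
  finally show ?case
    by (simp add: c_def)
qed

lemma qbinom_nonneg: "0 < q \<Longrightarrow> q < 1 \<Longrightarrow> 0 \<le> qbinom q m k"
  using qpoch_pos[of q] by (simp add: qbinom_def less_imp_le)

lemma qbinom_le:
  assumes "0 < q" "q < 1"
  shows "qbinom q m k \<le> 1 / (Re (qpoch_inf (of_real q) q))\<^sup>2"
proof -
  define L where "L = Re (qpoch_inf (of_real q) q)"
  have "0 < L" "\<And>m. L \<le> qpoch q m"
    unfolding L_def using Re_qpoch_inf_of_real_pos[of q q] qpoch_ge_qpoch_inf assms by auto
  then have "qpoch q m / (qpoch q k * qpoch q (m - k)) \<le> 1 / L\<^sup>2"
    unfolding power2_eq_square using qpoch_le_1[OF assms] qpoch_pos[OF assms]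
    by (intro frac_le mult_mono) (auto intro: less_imp_le)
  then show ?thesis
    using \<open>0 < L\<close> by (simp add: qbinom_def L_def)
qed

lemma qbinom_central_LIMSEQ:
  assumes "0 < q" "q < 1"
  shows "(\<lambda>n. qbinom q (2 * n) (n + c)) \<longlonglongrightarrow> 1 / Re (qpoch_inf (of_real q) q)"
proof -
  define L where "L = Re (qpoch_inf (of_real q) q)"
  have lim: "qpoch q \<longlonglongrightarrow> L" and "0 < L"
    unfolding L_def using qpoch_LIMSEQ Re_qpoch_inf_of_real_pos[of q q] assms by auto
  have "(\<lambda>n. qpoch q (2 * n)) \<longlonglongrightarrow> L"
    using LIMSEQ_subseq_LIMSEQ[OF lim, of "(*) 2"] by (simp add: strict_mono_def o_def)
  moreover have "(\<lambda>n. qpoch q (n + c)) \<longlonglongrightarrow> L"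
    using LIMSEQ_ignore_initial_segment[OF lim] .
  moreover have "(\<lambda>n. qpoch q (n - c)) \<longlonglongrightarrow> L"
    using filterlim_compose[OF lim filterlim_minus_const_nat_at_top] by (simp add: o_def)
  ultimately have "(\<lambda>n. qpoch q (2 * n) / (qpoch q (n + c) * qpoch q (n - c))) \<longlonglongrightarrow> L / (L * L)"
    using \<open>0 < L\<close> by (intro tendsto_intros) auto
  moreover have "\<forall>\<^sub>F n in sequentially.
      qpoch q (2 * n) / (qpoch q (n + c) * qpoch q (n - c)) = qbinom q (2 * n) (n + c)"
    using eventually_ge_at_top[of c]
    by eventually_elim (simp add: qbinom_def mult_2 diff_add_eq_diff_diff_swap)
  ultimately show ?thesis
    using \<open>0 < L\<close> by (simp add: L_def Lim_transform_eventually)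
qed

section \<open>The finite Jacobi triple product\<close>

lemma sum_atMost_double_split:
  fixes h :: "nat \<Rightarrow> 'a::comm_monoid_add"
  shows "(\<Sum>k\<le>2 * n. h k) = h n + (\<Sum>j=1..n. h (n - j) + h (n + j))"
proof (induction n arbitrary: h)
  case 0
  then show ?case by simp
next
  case (Suc n)
  have "(\<Sum>k\<le>2 * Suc n. h k) = h 0 + (\<Sum>k\<le>Suc (2 * n). h (Suc k))"
    by (simp add: sum.atMost_Suc_shift del: sum.atMost_Suc)
  also have "\<dots> = h 0 + (\<Sum>k\<le>2 * n. h (Suc k)) + h (2 * Suc n)"
    by (simp add: add.assoc)
  also have "(\<Sum>k\<le>2 * n. h (Suc k)) = h (Suc n) + (\<Sum>j=1..n. h (Suc n - j) + h (Suc n + j))"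
    using Suc.IH[of "\<lambda>k. h (Suc k)"] by (simp add: Suc_diff_le)
  also have "h 0 + (h (Suc n) + (\<Sum>j=1..n. h (Suc n - j) + h (Suc n + j))) + h (2 * Suc n)
             = h (Suc n) + (\<Sum>j=1..Suc n. h (Suc n - j) + h (Suc n + j))"
    by (simp add: ac_simps mult_2 mult_2_right)
  finally show ?case .
qed

lemma cis_quadratic_factor:
  "(of_real r * cis x - 1) * (cis x - of_real r) = - cis x * of_real (1 - 2 * r * cos x + r\<^sup>2)"
proof -
  have "cis x ^ 2 + 1 = 2 * of_real (cos x) * cis x"
    by (simp add: complex_eq_iff power2_eq_square algebra_simps)
  then have "of_real r * (cis x ^ 2 + 1) = of_real r * (2 * of_real (cos x) * cis x)"
    by simp
  then show ?thesis
    by (simp add: algebra_simps power2_eq_square)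
qed

lemma cis_power_diff_add_power_add:
  assumes "j \<le> n"
  shows "cis x ^ (n - j) + cis x ^ (n + j) = cis x ^ n * of_real (2 * cos (real j * x))"
proof -
  have "real (n - j) * x = real n * x + - (real j * x)"
    using assms by (simp add: of_nat_diff algebra_simps)
  then have "cis x ^ (n - j) = cis (real n * x + - (real j * x))"
    unfolding Complex.DeMoivre by simp
  also have "\<dots> = cis x ^ n * cis (- (real j * x))"
    unfolding Complex.DeMoivre cis_mult ..
  finally have "cis x ^ (n - j) = cis x ^ n * cis (- (real j * x))" .
  moreover have "cis x ^ (n + j) = cis x ^ n * cis (real j * x)"
    by (simp add: power_add Complex.DeMoivre)
  moreover have "cis (- (real j * x)) + cis (real j * x) = of_real (2 * cos (real j * x))"
    by (simp add: complex_eq_iff)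
  ultimately show ?thesis
    by (simp flip: distrib_left)
qed

lemma triple_product_factor_pair:
  assumes "l < n"
  shows "(of_real (p ^ (2 * n - 1)) * cis x - of_real ((p\<^sup>2) ^ (n - Suc l)))
         * (of_real (p ^ (2 * n - 1)) * cis x - of_real ((p\<^sup>2) ^ (n + l)))
         = of_real (p ^ (2 * (n - Suc l) + (2 * n - 1))) * - cis x
           * of_real (1 - 2 * p ^ (2 * l + 1) * cos x + p ^ (4 * l + 2))"
proof -
  define r where "r = p ^ (2 * l + 1)"
  have e1: "2 * n - 1 = 2 * (n - Suc l) + (2 * l + 1)"
    and e2: "2 * (n + l) = (2 * n - 1) + (2 * l + 1)"
    and e3: "4 * l + 2 = (2 * l + 1) * 2"
    using assms by simp_all
  have "p ^ (2 * n - 1) = p ^ (2 * (n - Suc l)) * r"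
    unfolding r_def e1 by (rule power_add)
  moreover have "(p\<^sup>2) ^ (n + l) = p ^ (2 * n - 1) * r"
    unfolding r_def power_mult[symmetric] e2 by (rule power_add)
  moreover have "(p\<^sup>2) ^ (n - Suc l) = p ^ (2 * (n - Suc l))"
    by (rule power_mult[symmetric])
  moreover have r2: "p ^ (4 * l + 2) = r\<^sup>2"
    unfolding r_def e3 by (rule power_mult)
  ultimately have "(of_real (p ^ (2 * n - 1)) * cis x - of_real ((p\<^sup>2) ^ (n - Suc l)))
             * (of_real (p ^ (2 * n - 1)) * cis x - of_real ((p\<^sup>2) ^ (n + l)))
             = of_real (p ^ (2 * (n - Suc l)) * p ^ (2 * n - 1))
               * ((of_real r * cis x - 1) * (cis x - of_real r))"
    by (simp add: algebra_simps)
  also have "\<dots> = of_real (p ^ (2 * (n - Suc l)) * p ^ (2 * n - 1))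
                    * (- cis x * of_real (1 - 2 * r * cos x + r\<^sup>2))"
    by (simp only: cis_quadratic_factor)
  finally show ?thesis
    unfolding r_def[symmetric] r2 by (simp add: power_add algebra_simps)
qed

lemma triple_product_lhs:
  assumes "1 \<le> n"
  shows "(\<Prod>i<2 * n. of_real (p ^ (2 * n - 1)) * cis x - of_real ((p\<^sup>2) ^ i))
         = of_real (p ^ (n * (3 * n - 2))) * (- cis x) ^ n
           * of_real (\<Prod>l<n. 1 - 2 * p ^ (2 * l + 1) * cos x + p ^ (4 * l + 2))"
proof -
  define f where "f i = of_real (p ^ (2 * n - 1)) * cis x - of_real ((p\<^sup>2) ^ i)" for i
  have split: "(\<Prod>i<n + m. f i) = (\<Prod>i<n. f i) * (\<Prod>i<m. f (n + i))" for m
    by (induction m) (simp_all add: mult.assoc)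
  have "(\<Sum>l<n. 2 * (n - Suc l)) = (\<Sum>l<n. 2 * l)"
    by (rule sum.nat_diff_reindex)
  also have "(\<Sum>l<n. 2 * l) = n * (n - 1)"
    by (induction n) (auto simp: algebra_simps)
  finally have "(\<Sum>l<n. 2 * (n - Suc l) + (2 * n - 1)) = n * (n - 1) + n * (2 * n - 1)"
    by (subst sum.distrib) simp
  also have "\<dots> = n * (3 * n - 2)"
    using assms by (cases n) (simp_all add: algebra_simps)
  finally have exponent: "(\<Sum>l<n. 2 * (n - Suc l) + (2 * n - 1)) = n * (3 * n - 2)" .
  have "(\<Prod>i<2 * n. f i) = (\<Prod>l<n. f (n - Suc l) * f (n + l))"
    using split[of n] by (simp add: mult_2 prod.distrib prod.nat_diff_reindex)
  also have "\<dots> = (\<Prod>l<n. of_real (p ^ (2 * (n - Suc l) + (2 * n - 1))) * - cis x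
                      * of_real (1 - 2 * p ^ (2 * l + 1) * cos x + p ^ (4 * l + 2)))"
    unfolding f_def by (intro prod.cong refl triple_product_factor_pair) simp
  also have "\<dots> = of_real (p ^ (\<Sum>l<n. 2 * (n - Suc l) + (2 * n - 1))) * (- cis x) ^ n
                   * of_real (\<Prod>l<n. 1 - 2 * p ^ (2 * l + 1) * cos x + p ^ (4 * l + 2))"
    by (simp only: prod.distrib prod_constant card_lessThan of_real_prod power_sum)
  finally show ?thesis
    unfolding f_def exponent .
qed

text \<open>
  The \<open>k\<close>-th term of the \<open>q\<close>-binomial expansion of \<open>\<Prod>\<^bsub>i<2n\<^esub> (X - q^i)\<close> for
  \<open>q = p\<^sup>2\<close> and \<open>X = p^(2n-1) e^(ix)\<close>; by \<open>triple_product_lhs\<close> the product pairs up into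
  the factors of the triple product.
\<close>

definition triple_product_summand :: "real \<Rightarrow> real \<Rightarrow> nat \<Rightarrow> nat \<Rightarrow> complex" where
  "triple_product_summand p x n k = of_real ((p\<^sup>2) ^ (k * (k - 1) div 2) * qbinom (p\<^sup>2) (2 * n) k)
     * (of_real (p ^ (2 * n - 1)) * cis x) ^ (2 * n - k) * (-1) ^ k"

lemma triple_product_exponent:
  assumes "1 \<le> n" "k \<le> 2 * n"
  shows "int (k * (k - 1) + (2 * n - 1) * (2 * n - k)) = int (n * (3 * n - 2)) + (int k - int n)\<^sup>2"
proof -
  have "int (k * (k - 1)) = int k * (int k - 1)"
    by (cases k) (simp_all add: algebra_simps)
  moreover have "int (2 * n - 1) = 2 * int n - 1" "int (2 * n - k) = 2 * int n - int k"
    "int (3 * n - 2) = 3 * int n - 2"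
    using assms by simp_all
  ultimately show ?thesis
    unfolding of_nat_add of_nat_mult by (simp add: power2_eq_square algebra_simps)
qed

lemma triple_product_summand_eq:
  assumes "1 \<le> n" "j \<le> n" "k = n + j \<or> k + j = n"
  shows "triple_product_summand p x n k
         = (-1) ^ k * of_real (qbinom (p\<^sup>2) (2 * n) k * p ^ (n * (3 * n - 2) + j * j)) * cis x ^ (2 * n - k)"
proof -
  have "k \<le> 2 * n"
    using assms by auto
  have "int (k * (k - 1) + (2 * n - 1) * (2 * n - k)) = int (n * (3 * n - 2) + j * j)"
    using triple_product_exponent[OF assms(1) \<open>k \<le> 2 * n\<close>] assms(3)
    by (auto simp: power2_eq_square)
  then have exponent: "k * (k - 1) + (2 * n - 1) * (2 * n - k) = n * (3 * n - 2) + j * j"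
    by (simp only: of_nat_eq_iff)
  have "2 * (k * (k - 1) div 2) = k * (k - 1)"
    by (cases k) auto
  then have "(p\<^sup>2) ^ (k * (k - 1) div 2) * (p ^ (2 * n - 1)) ^ (2 * n - k) = p ^ (n * (3 * n - 2) + j * j)"
    unfolding exponent[symmetric] power_add by (simp only: power_mult[symmetric])
  then show ?thesis
    unfolding triple_product_summand_def
    by (simp add: power_mult_distrib algebra_simps flip: of_real_power of_real_mult)
qed

lemma triple_product_summand_center:
  assumes "1 \<le> n"
  shows "triple_product_summand p x n n
         = of_real (p ^ (n * (3 * n - 2))) * (- cis x) ^ n * of_real (qbinom (p\<^sup>2) (2 * n) n)"
proof -
  have "triple_product_summand p x n n
        = (-1) ^ n * of_real (qbinom (p\<^sup>2) (2 * n) n * p ^ (n * (3 * n - 2) + 0 * 0)) * cis x ^ (2 * n - n)"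
    using assms by (rule triple_product_summand_eq) simp_all
  moreover have "2 * n - n = n"
    by simp
  ultimately show ?thesis
    unfolding power_minus[of "cis x"] by (simp only: mult_zero_left add_0_right of_real_mult mult_ac)
qed

lemma triple_product_summand_pair:
  assumes "1 \<le> n" "j \<le> n"
  shows "triple_product_summand p x n (n - j) + triple_product_summand p x n (n + j)
         = of_real (p ^ (n * (3 * n - 2))) * (- cis x) ^ n
           * of_real (2 * ((-1) ^ j * qbinom (p\<^sup>2) (2 * n) (n + j) * p ^ (j * j) * cos (real j * x)))"
proof -
  have "qbinom (p\<^sup>2) (2 * n) (n - j) = qbinom (p\<^sup>2) (2 * n) (n + j)"
    using qbinom_symmetric[of "n + j" "2 * n"] assms by (simp add: mult_2)
  moreover have "(-1::complex) ^ (n - j) = (-1) ^ (n + j)"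
    using assms by (simp add: minus_one_power_iff)
  moreover have "2 * n - (n - j) = n + j" "2 * n - (n + j) = n - j"
    using assms by simp_all
  ultimately have "triple_product_summand p x n (n - j) + triple_product_summand p x n (n + j)
      = (-1) ^ (n + j) * of_real (qbinom (p\<^sup>2) (2 * n) (n + j) * p ^ (n * (3 * n - 2) + j * j))
        * (cis x ^ (n - j) + cis x ^ (n + j))"
    using triple_product_summand_eq[OF assms, of "n - j"] triple_product_summand_eq[OF assms, of "n + j"]
      assms by (simp only: distrib_left add.commute) simp
  also have "\<dots> = of_real (p ^ (n * (3 * n - 2))) * (- cis x) ^ n
                   * of_real (2 * ((-1) ^ j * qbinom (p\<^sup>2) (2 * n) (n + j) * p ^ (j * j) * cos (real j * x)))"
    unfolding cis_power_diff_add_power_add[OF assms(2)]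
    by (simp add: power_minus[of "cis x"] power_add)
  finally show ?thesis .
qed

lemma triple_product_rhs:
  assumes "1 \<le> n"
  shows "(\<Sum>k\<le>2 * n. triple_product_summand p x n k)
         = of_real (p ^ (n * (3 * n - 2))) * (- cis x) ^ n
           * of_real (qbinom (p\<^sup>2) (2 * n) n + 2 * (\<Sum>j=1..n. (-1) ^ j
               * qbinom (p\<^sup>2) (2 * n) (n + j) * p ^ (j * j) * cos (real j * x)))"
  unfolding sum_atMost_double_split
  using triple_product_summand_center[OF assms] triple_product_summand_pair[OF assms]
  by (simp add: distrib_left sum_distrib_left)

lemma finite_triple_product:
  assumes "0 < p" "p < 1"
  shows "(\<Prod>l<n. 1 - 2 * p ^ (2 * l + 1) * cos x + p ^ (4 * l + 2))
         = qbinom (p\<^sup>2) (2 * n) n + 2 * (\<Sum>j=1..n. (-1) ^ j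
             * qbinom (p\<^sup>2) (2 * n) (n + j) * p ^ (j * j) * cos (real j * x))"
proof -
  have q: "0 < p\<^sup>2" "p\<^sup>2 < 1"
    using assms by (simp_all add: power_less_one_iff)
  show ?thesis
  proof (cases "n = 0")
    case False
    then have "1 \<le> n"
      by simp
    have "(\<Prod>i<2 * n. of_real (p ^ (2 * n - 1)) * cis x + of_real ((p\<^sup>2) ^ i) * -1)
          = (\<Sum>k\<le>2 * n. triple_product_summand p x n k)"
      unfolding triple_product_summand_def by (rule qbinomial_theorem[OF q])
    then have eq: "of_real (p ^ (n * (3 * n - 2))) * (- cis x) ^ n
                 * of_real (\<Prod>l<n. 1 - 2 * p ^ (2 * l + 1) * cos x + p ^ (4 * l + 2))
               = of_real (p ^ (n * (3 * n - 2))) * (- cis x) ^ n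
                 * of_real (qbinom (p\<^sup>2) (2 * n) n + 2 * (\<Sum>j=1..n. (-1) ^ j
                     * qbinom (p\<^sup>2) (2 * n) (n + j) * p ^ (j * j) * cos (real j * x)))"
      unfolding triple_product_lhs[OF \<open>1 \<le> n\<close>, symmetric] triple_product_rhs[OF \<open>1 \<le> n\<close>, symmetric]
      by simp
    have nonzero: "of_real (p ^ (n * (3 * n - 2))) * (- cis x) ^ n \<noteq> 0"
      using assms by simp
    from eq show ?thesis
      unfolding mult_left_cancel[OF nonzero] of_real_eq_iff .
  qed (use qbinom_0[OF q] in simp)
qed

section \<open>The theta function on the imaginary axis\<close>

text \<open>\<open>\<theta>\<^sub>4(x/(2\<pi>) | \<tau>)\<close> as a cosine series in terms of the real nome \<open>p = e^(\<pi>i\<tau>)\<close>.\<close>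

definition theta4_series :: "real \<Rightarrow> real \<Rightarrow> real" where
  "theta4_series p x = 1 + 2 * (\<Sum>j. (-1) ^ Suc j * p ^ (Suc j * Suc j) * cos (real (Suc j) * x))"

lemma theta4_term_bound:
  fixes p c y :: real
  assumes "0 < p" "p < 1"
  shows "\<bar>c * p ^ (Suc j * Suc j) * cos y\<bar> \<le> \<bar>c\<bar> * p ^ Suc j"
proof -
  define a where "a = p ^ (Suc j * Suc j)"
  have "0 \<le> a" "a \<le> p ^ Suc j"
    unfolding a_def using assms by (auto intro: power_decreasing)
  then have "\<bar>c\<bar> * a * \<bar>cos y\<bar> \<le> \<bar>c\<bar> * p ^ Suc j * 1"
    by (intro mult_mono mult_left_mono) auto
  then show ?thesis
    unfolding a_def[symmetric] by (simp add: abs_mult \<open>0 \<le> a\<close>)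
qed

lemma summable_power_Suc_square:
  fixes p :: real
  assumes "0 < p" "p < 1"
  shows "summable (\<lambda>j. p ^ (Suc j * Suc j))"
proof (rule summable_comparison_test)
  show "\<exists>N. \<forall>j\<ge>N. norm (p ^ (Suc j * Suc j)) \<le> p ^ Suc j"
    using theta4_term_bound[OF assms, of 1 _ 0] by simp
qed (use assms in \<open>simp add: summable_geometric\<close>)

lemma summable_theta4_series:
  assumes "0 < p" "p < 1"
  shows "summable (\<lambda>j. (-1) ^ Suc j * p ^ (Suc j * Suc j) * cos (real (Suc j) * x))"
proof (rule summable_comparison_test)
  show "summable (\<lambda>j. p ^ Suc j)"
    using assms by (simp add: summable_geometric)
  show "\<exists>N. \<forall>j\<ge>N. norm ((-1) ^ Suc j * p ^ (Suc j * Suc j) * cos (real (Suc j) * x)) \<le> p ^ Suc j"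
    using theta4_term_bound[OF assms, of "(-1) ^ Suc _"] by simp
qed

lemma sum_atLeast_1_eq_suminf:
  fixes f :: "nat \<Rightarrow> 'a::{t2_space,comm_monoid_add}"
  assumes "\<And>j. n < j \<Longrightarrow> f j = 0"
  shows "(\<Sum>j=1..n. f j) = (\<Sum>j. f (Suc j))"
proof -
  have "(\<Sum>j. f (Suc j)) = (\<Sum>j<n. f (Suc j))"
    using assms by (intro suminf_finite) auto
  then show ?thesis
    by (simp add: sum_bounds_lt_plus1)
qed

lemma theta4_qbinom_term_bound:
  assumes "0 < p" "p < 1"
  shows "\<bar>(-1) ^ Suc j * qbinom (p\<^sup>2) (2 * n) (n + Suc j) * p ^ (Suc j * Suc j) * cos y\<bar>
         \<le> 1 / (Re (qpoch_inf (of_real (p\<^sup>2)) (p\<^sup>2)))\<^sup>2 * p ^ Suc j"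
proof -
  have q: "0 < p\<^sup>2" "p\<^sup>2 < 1"
    using assms by (simp_all add: power_less_one_iff)
  have "\<bar>(-1) ^ Suc j * qbinom (p\<^sup>2) (2 * n) (n + Suc j)\<bar> \<le> 1 / (Re (qpoch_inf (of_real (p\<^sup>2)) (p\<^sup>2)))\<^sup>2"
    using qbinom_le[OF q, of "2 * n" "n + Suc j"] qbinom_nonneg[OF q, of "2 * n" "n + Suc j"]
    by (simp add: abs_mult)
  then show ?thesis
    using theta4_term_bound[OF assms, of "(-1) ^ Suc j * qbinom (p\<^sup>2) (2 * n) (n + Suc j)" j y] assms
    by (meson mult_right_mono order_trans zero_le_power less_imp_le)
qed

lemma theta4_partial_sums_LIMSEQ:
  assumes "0 < p" "p < 1"
  shows "(\<lambda>n. \<Sum>j=1..n. (-1) ^ j * qbinom (p\<^sup>2) (2 * n) (n + j) * p ^ (j * j) * cos (real j * x))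
         \<longlonglongrightarrow> (\<Sum>j. (-1) ^ Suc j * p ^ (Suc j * Suc j) * cos (real (Suc j) * x))
               / Re (qpoch_inf (of_real (p\<^sup>2)) (p\<^sup>2))"
proof -
  define L where "L = Re (qpoch_inf (of_real (p\<^sup>2)) (p\<^sup>2))"
  have q: "0 < p\<^sup>2" "p\<^sup>2 < 1"
    using assms by (simp_all add: power_less_one_iff)
  define a where "a j n = (-1) ^ Suc j * qbinom (p\<^sup>2) (2 * n) (n + Suc j)
                            * p ^ (Suc j * Suc j) * cos (real (Suc j) * x)" for j n
  have partial_sum: "(\<Sum>j=1..n. (-1) ^ j * qbinom (p\<^sup>2) (2 * n) (n + j) * p ^ (j * j) * cos (real j * x))
                     = (\<Sum>j. a j n)" for n
    unfolding a_def by (rule sum_atLeast_1_eq_suminf) (simp add: qbinom_eq_0)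
  have "(\<lambda>n. \<Sum>j. a j n) \<longlonglongrightarrow> (\<Sum>j. (-1) ^ Suc j * (1 / L) * p ^ (Suc j * Suc j) * cos (real (Suc j) * x))"
  proof -
    have "(\<forall>\<^sub>F n in sequentially. summable (\<lambda>j. norm (a j n)))
          \<and> summable (\<lambda>j. norm ((-1) ^ Suc j * (1 / L) * p ^ (Suc j * Suc j) * cos (real (Suc j) * x)))
          \<and> (\<lambda>n. \<Sum>j. a j n)
               \<longlonglongrightarrow> (\<Sum>j. (-1) ^ Suc j * (1 / L) * p ^ (Suc j * Suc j) * cos (real (Suc j) * x))"
    proof (rule tannerys_theorem[where M = "\<lambda>j. 1 / L\<^sup>2 * p ^ Suc j"])
      show "(\<lambda>n. a j n) \<longlonglongrightarrow> (-1) ^ Suc j * (1 / L) * p ^ (Suc j * Suc j) * cos (real (Suc j) * x)" for j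
        unfolding a_def L_def by (intro tendsto_intros qbinom_central_LIMSEQ q)
      have "\<bar>a j n\<bar> \<le> 1 / L\<^sup>2 * p ^ Suc j" for j n
        unfolding a_def L_def by (rule theta4_qbinom_term_bound[OF assms])
      then show "\<forall>\<^sub>F (j, n) in at_top \<times>\<^sub>F sequentially. norm (a j n) \<le> 1 / L\<^sup>2 * p ^ Suc j"
        by (simp add: always_eventually)
      show "summable (\<lambda>j. 1 / L\<^sup>2 * p ^ Suc j)"
        using assms by (intro summable_mult) (simp add: summable_geometric)
    qed simp
    then show ?thesis by simp
  qed
  moreover have "(\<Sum>j. (-1) ^ Suc j * (1 / L) * p ^ (Suc j * Suc j) * cos (real (Suc j) * x))
                 = (\<Sum>j. (-1) ^ Suc j * p ^ (Suc j * Suc j) * cos (real (Suc j) * x)) / L"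
    using suminf_divide[OF summable_theta4_series[OF assms, of x], of L] by (simp add: field_simps)
  ultimately show ?thesis
    unfolding partial_sum L_def by simp
qed

lemma triple_product_LIMSEQ:
  assumes "0 < p" "p < 1"
  shows "(\<lambda>n. \<Prod>l<n. 1 - 2 * p ^ (2 * l + 1) * cos x + p ^ (4 * l + 2))
         \<longlonglongrightarrow> theta4_series p x / Re (qpoch_inf (of_real (p\<^sup>2)) (p\<^sup>2))"
proof -
  have q: "0 < p\<^sup>2" "p\<^sup>2 < 1"
    using assms by (simp_all add: power_less_one_iff)
  have "(\<lambda>n. qbinom (p\<^sup>2) (2 * n) n + 2 * (\<Sum>j=1..n. (-1) ^ j
            * qbinom (p\<^sup>2) (2 * n) (n + j) * p ^ (j * j) * cos (real j * x)))
        \<longlonglongrightarrow> 1 / Re (qpoch_inf (of_real (p\<^sup>2)) (p\<^sup>2))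
            + 2 * ((\<Sum>j. (-1) ^ Suc j * p ^ (Suc j * Suc j) * cos (real (Suc j) * x))
                   / Re (qpoch_inf (of_real (p\<^sup>2)) (p\<^sup>2)))"
    using qbinom_central_LIMSEQ[OF q, of 0]
    by (intro tendsto_intros theta4_partial_sums_LIMSEQ assms) simp
  then show ?thesis
    unfolding finite_triple_product[OF assms] theta4_series_def by (simp add: add_divide_distrib)
qed

lemma triple_product_factor_0:
  fixes p :: real
  shows "1 - 2 * p ^ (2 * l + 1) * cos 0 + p ^ (4 * l + 2) = (1 - p ^ (2 * l + 1))\<^sup>2"
proof -
  have "4 * l + 2 = (2 * l + 1) * (2::nat)"
    by simp
  then show ?thesis
    by (simp only: power_mult cos_zero power2_diff) simp
qed

lemma theta4_series_0_le:
  assumes "0 < p" "p < 1"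
  shows "theta4_series p 0 \<le> theta4_series p x"
proof -
  have "(\<Prod>l<n. 1 - 2 * p ^ (2 * l + 1) * cos 0 + p ^ (4 * l + 2))
        \<le> (\<Prod>l<n. 1 - 2 * p ^ (2 * l + 1) * cos x + p ^ (4 * l + 2))" for n
  proof (intro prod_mono conjI)
    fix l
    show "0 \<le> 1 - 2 * p ^ (2 * l + 1) * cos 0 + p ^ (4 * l + 2)"
      unfolding triple_product_factor_0 by simp
    show "1 - 2 * p ^ (2 * l + 1) * cos 0 + p ^ (4 * l + 2) \<le> 1 - 2 * p ^ (2 * l + 1) * cos x + p ^ (4 * l + 2)"
      using assms by (simp add: mult_left_le)
  qed
  then have "theta4_series p 0 / Re (qpoch_inf (of_real (p\<^sup>2)) (p\<^sup>2))
             \<le> theta4_series p x / Re (qpoch_inf (of_real (p\<^sup>2)) (p\<^sup>2))"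
    by (intro LIMSEQ_le[OF triple_product_LIMSEQ triple_product_LIMSEQ] assms) auto
  moreover have "0 < Re (qpoch_inf (of_real (p\<^sup>2)) (p\<^sup>2))"
    using assms by (intro Re_qpoch_inf_of_real_pos) (simp_all add: power_less_one_iff)
  ultimately show ?thesis
    by (simp add: divide_le_cancel)
qed

lemma theta4_series_0_pos:
  assumes "0 < p" "p < 1"
  shows "0 < theta4_series p 0"
proof -
  define M where "M = Re (qpoch_inf (of_real p) p)"
  have "0 < M"
    unfolding M_def using Re_qpoch_inf_of_real_pos[of p p] assms by simp
  have "M\<^sup>2 \<le> (\<Prod>l<n. 1 - 2 * p ^ (2 * l + 1) * cos 0 + p ^ (4 * l + 2))" for n
  proof -
    have "M\<^sup>2 \<le> (qpoch p n)\<^sup>2"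
      unfolding M_def using qpoch_ge_qpoch_inf[OF assms] \<open>0 < M\<close>
      by (intro power_mono) (auto simp: M_def)
    also have "\<dots> = (\<Prod>l<n. (1 - p ^ Suc l)\<^sup>2)"
      unfolding qpoch_def by (simp add: power_mult_distrib prod_power_distrib)
    also have "\<dots> \<le> (\<Prod>l<n. 1 - 2 * p ^ (2 * l + 1) * cos 0 + p ^ (4 * l + 2))"
    proof (intro prod_mono conjI)
      fix l
      have "p ^ (2 * l + 1) \<le> p ^ Suc l" "p ^ Suc l \<le> 1"
        using assms power_le_one[of p "Suc l"] by (auto intro: power_decreasing)
      then show "(1 - p ^ Suc l)\<^sup>2 \<le> 1 - 2 * p ^ (2 * l + 1) * cos 0 + p ^ (4 * l + 2)"
        unfolding triple_product_factor_0 by (simp add: power_mono)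
    qed simp
    finally show ?thesis .
  qed
  then have "M\<^sup>2 \<le> theta4_series p 0 / Re (qpoch_inf (of_real (p\<^sup>2)) (p\<^sup>2))"
    by (intro LIMSEQ_le_const[OF triple_product_LIMSEQ] assms) auto
  moreover have "0 < Re (qpoch_inf (of_real (p\<^sup>2)) (p\<^sup>2))"
    using assms by (intro Re_qpoch_inf_of_real_pos) (simp_all add: power_less_one_iff)
  ultimately show ?thesis
    using \<open>0 < M\<close> by (smt (verit) zero_less_divide_iff zero_less_power)
qed

lemma has_sum_int_symmetric:
  fixes f :: "int \<Rightarrow> 'a::banach"
  assumes "summable (\<lambda>j. norm (f (int (Suc j))))" "summable (\<lambda>j. norm (f (- int (Suc j))))"
  shows "(f has_sum (f 0 + (\<Sum>j. f (int (Suc j)) + f (- int (Suc j))))) UNIV"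
proof -
  define A B where "A = range (\<lambda>j. int (Suc j))" and "B = range (\<lambda>j. - int (Suc j))"
  have "(f has_sum (\<Sum>j. f (int (Suc j)))) A"
    using has_sum_reindex[of "\<lambda>j. int (Suc j)" UNIV f] norm_summable_imp_has_sum[OF assms(1)]
      summable_sums[OF summable_norm_cancel[OF assms(1)]]
    by (simp add: A_def inj_on_def o_def)
  moreover have "(f has_sum (\<Sum>j. f (- int (Suc j)))) B"
    using has_sum_reindex[of "\<lambda>j. - int (Suc j)" UNIV f] norm_summable_imp_has_sum[OF assms(2)]
      summable_sums[OF summable_norm_cancel[OF assms(2)]]
    by (simp add: B_def inj_on_def o_def)
  ultimately have "(f has_sum ((\<Sum>j. f (int (Suc j))) + (\<Sum>j. f (- int (Suc j))))) (A \<union> B)"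
    by (rule has_sum_Un_disjoint) (auto simp: A_def B_def)
  moreover have "0 \<notin> A \<union> B"
    by (auto simp: A_def B_def)
  ultimately have "(f has_sum (f 0 + ((\<Sum>j. f (int (Suc j))) + (\<Sum>j. f (- int (Suc j)))))) (insert 0 (A \<union> B))"
    by (intro has_sum_insert)
  moreover have "insert 0 (A \<union> B) = UNIV"
  proof -
    have "n \<in> insert 0 (A \<union> B)" for n :: int
    proof (cases "0::int" n rule: linorder_cases)
      case less
      then have "n = int (Suc (nat n - 1))" by simp
      then show ?thesis unfolding A_def by blast
    next
      case greater
      then have "n = - int (Suc (nat (- n) - 1))" by simp
      then show ?thesis unfolding B_def by blast
    qed simp
    then show ?thesis by blast
  qed
  ultimately show ?thesis
    using suminf_add[OF summable_norm_cancel[OF assms(1)] summable_norm_cancel[OF assms(2)]] by simp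
qed

lemma cis_power_int_pair:
  "of_real c * (- cis x) powi int k + of_real c * (- cis x) powi (- int k)
   = of_real (2 * (-1) ^ k * c * cos (real k * x))"
proof -
  have "(- cis x) powi int k = (-1) ^ k * cis (real k * x)"
    unfolding power_int_of_nat power_minus[of "cis x"] Complex.DeMoivre ..
  moreover have "(- cis x) powi (- int k) = (-1) ^ k * cis (- (real k * x))"
  proof -
    have "inverse ((-1::complex) ^ k) = (-1) ^ k"
      by (simp flip: power_inverse)
    then show ?thesis
      unfolding power_int_minus power_int_of_nat power_minus[of "cis x"] Complex.DeMoivre
        inverse_mult_distrib cis_inverse by simp
  qed
  moreover have "cis (real k * x) + cis (- (real k * x)) = of_real (2 * cos (real k * x))"
    by (simp add: complex_eq_iff)
  ultimately show ?thesis
    by (simp add: algebra_simps flip: distrib_left)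
qed

lemma theta4_eq_theta4_series:
  assumes "0 < u"
  shows "theta4 (of_real v) (\<i> * of_real u) = of_real (theta4_series (exp (- pi * u)) (2 * pi * v))"
proof -
  define p x where "p = exp (- pi * u)" and "x = 2 * pi * v"
  have p: "0 < p" "p < 1"
    unfolding p_def using assms by auto
  have "exp (of_real pi * \<i> * (\<i> * of_real u)) = of_real p"
    unfolding p_def by (simp flip: exp_of_real add: algebra_simps)
  moreover have "exp (2 * of_real pi * \<i> * of_real v) = cis x"
    unfolding x_def cis_conv_exp by (simp add: algebra_simps)
  moreover define f where "f n = of_real p ^ nat (n\<^sup>2) * (- cis x) powi n" for n :: int
  ultimately have theta: "theta4 (of_real v) (\<i> * of_real u) = (\<Sum>\<^sub>\<infinity>n. f n)"
    unfolding theta4_def Let_def by simp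
  have f_pm: "f (int k) = of_real (p ^ (k * k)) * (- cis x) powi int k"
    "f (- int k) = of_real (p ^ (k * k)) * (- cis x) powi (- int k)" for k
    unfolding f_def by (simp_all add: power2_eq_square nat_mult_distrib)
  have norm_f: "norm (f (int k)) = p ^ (k * k)" "norm (f (- int k)) = p ^ (k * k)" for k
    unfolding f_pm using p by (simp_all add: norm_mult norm_power norm_power_int)
  have "(f has_sum (f 0 + (\<Sum>j. f (int (Suc j)) + f (- int (Suc j))))) UNIV"
    by (intro has_sum_int_symmetric) (simp_all only: norm_f summable_power_Suc_square[OF p])
  define t where "t j = (-1) ^ Suc j * p ^ (Suc j * Suc j) * cos (real (Suc j) * x)" for j
  have "f (int (Suc j)) + f (- int (Suc j)) = of_real (2 * t j)" for j
    unfolding f_pm cis_power_int_pair t_def by (simp add: algebra_simps)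
  then have "f 0 + (\<Sum>j. f (int (Suc j)) + f (- int (Suc j))) = 1 + (\<Sum>j. of_real (2 * t j))"
    by (simp add: f_def)
  also have "\<dots> = of_real (theta4_series p x)"
    using summable_theta4_series[OF p, of x]
    unfolding theta4_series_def t_def[symmetric]
    by (simp add: suminf_mult suminf_of_real[symmetric] summable_mult)
  finally have "(f has_sum of_real (theta4_series p x)) UNIV"
    using \<open>(f has_sum _) UNIV\<close> by simp
  then show ?thesis
    unfolding theta p_def x_def by (rule infsumI)
qed

lemma theta4_ratio_ge_1:
  assumes "0 < u"
  shows "1 \<le> Re (theta4 (of_real v) (\<i> * of_real u) / theta4 0 (\<i> * of_real u))"
    and "Im (theta4 (of_real v) (\<i> * of_real u) / theta4 0 (\<i> * of_real u)) = 0"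
proof -
  define p where "p = exp (- pi * u)"
  have p: "0 < p" "p < 1"
    unfolding p_def using assms by auto
  have "theta4 (of_real v) (\<i> * of_real u) / theta4 0 (\<i> * of_real u)
        = of_real (theta4_series p (2 * pi * v) / theta4_series p 0)"
    using theta4_eq_theta4_series[OF assms, of v] theta4_eq_theta4_series[OF assms, of 0]
    by (simp add: p_def)
  moreover have "1 \<le> theta4_series p (2 * pi * v) / theta4_series p 0"
    using theta4_series_0_le[OF p] theta4_series_0_pos[OF p] by simp
  ultimately show "1 \<le> Re (theta4 (of_real v) (\<i> * of_real u) / theta4 0 (\<i> * of_real u))"
    and "Im (theta4 (of_real v) (\<i> * of_real u) / theta4 0 (\<i> * of_real u)) = 0"
    by simp_all
qed

theorem corollary2p2:
  fixes q u v :: real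
  assumes "0 < q" "q < 1" "0 < u"
  shows "(cmod (qpoch_inf (cpowq q (Complex u v)) q)
           \<ge> Re (qpoch_inf (cpowq q (of_real u)) q) * q powr (v^2 / 4)
         \<and> Im (qpoch_inf (cpowq q (of_real u)) q) = 0)
       \<and> (Re (qGamma q (of_real u)) \<ge> cmod (qGamma q (Complex u v)) * q powr (v^2 / 4)
         \<and> Im (qGamma q (of_real u)) = 0)
       \<and> (Re (theta4 (of_real v) (\<i> * of_real u) / theta4 0 (\<i> * of_real u))
           \<ge> exp (- pi * v^2 / u)
         \<and> Im (theta4 (of_real v) (\<i> * of_real u) / theta4 0 (\<i> * of_real u)) = 0)"
proof -
  have "q powr (v\<^sup>2 / 4) \<le> 1" "exp (- pi * v\<^sup>2 / u) \<le> 1"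
    using assms by (auto intro: powr_le1 simp: divide_nonpos_pos)
  moreover have "Re (qpoch_inf (cpowq q (of_real u)) q) \<le> cmod (qpoch_inf (cpowq q (Complex u v)) q)"
    and "0 < Re (qpoch_inf (cpowq q (of_real u)) q)"
    using qpoch_inf_cpowq_ge Re_qpoch_inf_cpowq_of_real_pos assms by auto
  moreover have "cmod (qGamma q (Complex u v)) \<le> Re (qGamma q (of_real u))"
    and "Im (qGamma q (of_real u)) = 0"
    using norm_qGamma_le assms by (auto simp: qGamma_of_real)
  moreover have "1 \<le> Re (theta4 (of_real v) (\<i> * of_real u) / theta4 0 (\<i> * of_real u))"
    and "Im (theta4 (of_real v) (\<i> * of_real u) / theta4 0 (\<i> * of_real u)) = 0"
    using theta4_ratio_ge_1 assms by auto
  ultimately show ?thesis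
    using Im_qpoch_inf_cpowq_of_real[OF assms]
    by (smt (verit) mult_left_le mult_right_le_one_le norm_ge_zero)
qed

end
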